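(* Let $\kappa$ be a regular uncountable cardinal with $\kappa^{<\kappa}=\kappa$ and $\gamma^\omega<\kappa$ for all $\gamma<\kappa$. There is a $\kappa$-representation $\langle I^0_\alpha\mid\alpha<\kappa\rangle$ of $I^0$ such that for every limit ordinal $\delta<\kappa$ and every $\nu\in I^0$ with $\nu\notin I^0_\delta$ there is $\beta<\delta$ satisfying: for every $\sigma\in I^0_\delta$ with $\sigma>\nu$ there is $\sigma'\in I^0_\beta$ with $\sigma>\sigma'>\nu$.
   Context: Let $\mathbb Q$ be the rationals and order $\kappa\times\mathbb Q$ lexicographically. $I^0$ is the set of functions $f:\omega\to\kappa\times\mathbb Q$, written $f(n)=(f_1(n),f_2(n))$, such that $\{n<\omega\mid f_1(n)\ne0\}$ is finite, ordered by $f<g$ iff $f(n)<g(n)$ for the least $n$ with $f(n)\ne g(n)$. A $\kappa$-representation of a set $A$ of size $\le\kappa$ is an increasing continuous sequence of subsets of $A$, each of size $<\kappa$, whose union is $A$. *)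

theory Defs
  imports Main "HOL-Library.Countable_Set" Complex_Main
begin

text \<open>The cardinal kappa is represented by a cardinal well-order r whose field is
the whole type 'k; its elements are the ordinals below kappa.\<close>

definition kless :: "'k rel \<Rightarrow> 'k \<Rightarrow> 'k \<Rightarrow> bool" where
  "kless r a b \<longleftrightarrow> a \<noteq> b \<and> (a, b) \<in> r"

definition kzero :: "'k rel \<Rightarrow> 'k" where
  "kzero r = (THE a. \<forall>b. (a, b) \<in> r)"

definition klimit :: "'k rel \<Rightarrow> 'k \<Rightarrow> bool" where
  "klimit r d \<longleftrightarrow> d \<noteq> kzero r \<and> (\<forall>a. kless r a d \<longrightarrow> (\<exists>b. kless r a b \<and> kless r b d))"

definition pless :: "'k rel \<Rightarrow> 'k \<times> rat \<Rightarrow> 'k \<times> rat \<Rightarrow> bool" where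
  "pless r x y \<longleftrightarrow> kless r (fst x) (fst y) \<or> (fst x = fst y \<and> snd x < snd y)"

definition I0 :: "'k rel \<Rightarrow> (nat \<Rightarrow> 'k \<times> rat) set" where
  "I0 r = {f. finite {n. fst (f n) \<noteq> kzero r}}"

definition Iless :: "'k rel \<Rightarrow> (nat \<Rightarrow> 'k \<times> rat) \<Rightarrow> (nat \<Rightarrow> 'k \<times> rat) \<Rightarrow> bool" where
  "Iless r f g \<longleftrightarrow> (\<exists>n. (\<forall>m<n. f m = g m) \<and> pless r (f n) (g n))"

definition krep :: "'k rel \<Rightarrow> 'a set \<Rightarrow> ('k \<Rightarrow> 'a set) \<Rightarrow> bool" where
  "krep r A X \<longleftrightarrow>
     (\<forall>a. X a \<subseteq> A) \<and>
     (\<forall>a b. (a, b) \<in> r \<longrightarrow> X a \<subseteq> X b) \<and>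
     (\<forall>d. klimit r d \<longrightarrow> X d = (\<Union>a\<in>{a. kless r a d}. X a)) \<and>
     (\<forall>a. (card_of (X a), r) \<in> ordLess) \<and>
     (\<Union>a. X a) = A"

end

(*
  Take for I0_\<alpha> the functions all of whose first coordinates are below \<alpha>. It has size at
  most |\<alpha> \<times> \<rat>|^\<omega> < \<kappa>, and continuity at limits and exhaustion of I0 hold because an
  element of I0 has only finitely many first coordinates.
  Given a limit \<delta> and \<nu> \<in> I0, let \<beta> < \<delta> lie above the finitely many first coordinates of \<nu>
  that are below \<delta>. If \<sigma> \<in> I0_\<delta> lies above \<nu> and first differs from it at n, then the first
  coordinates of \<nu> up to n are below \<delta>. So the function that copies \<nu> before n, takes at n a
  value strictly between \<nu> n and \<sigma> n with the same first coordinate as \<nu> n (density of \<rat>),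
  and vanishes after n, lies in I0_\<beta> strictly between \<nu> and \<sigma>.
*)
theory Submission
  imports Defs
begin

unbundle cardinal_syntax

lemma IlessI: "\<forall>m<n. f m = g m \<Longrightarrow> pless r (f n) (g n) \<Longrightarrow> Iless r f g"
  unfolding Iless_def by blast

lemma pless_dense:
  assumes "pless r x y"
  obtains p where "fst p = fst x" "pless r x p" "pless r p y"
proof (cases "kless r (fst x) (fst y)")
  case True
  then show ?thesis by (intro that[of "(fst x, snd x + 1)"]) (auto simp: pless_def)
next
  case False
  with assms have "fst x = fst y" "snd x < snd y" by (auto simp: pless_def)
  then show ?thesis by (intro that[of "(fst x, (snd x + snd y) / 2)"]) (auto simp: pless_def)
qed

lemma card_of_Func_UNIV_mono_inj:
  assumes "inj_on g A" "g ` A \<subseteq> B"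
  shows "|Func (UNIV :: 'i set) A| \<le>o |Func (UNIV :: 'i set) B|"
proof -
  have "inj_on ((\<circ>) g) (Func UNIV A)"
    using assms(1) by (auto simp: inj_on_def Func_def fun_eq_iff)
  moreover have "(\<circ>) g ` Func UNIV A \<subseteq> Func UNIV B"
    using assms(2) by (auto simp: Func_def)
  ultimately show ?thesis by (meson card_of_ordLeq)
qed

lemma inj_Times_rat_into_infinite:
  assumes "infinite C"
  obtains g where "inj_on g (C \<times> (UNIV :: rat set))" "g ` (C \<times> UNIV) \<subseteq> C"
proof -
  have "|UNIV :: rat set| \<le>o |UNIV :: nat set|"
    using card_of_ordLeq inj_to_nat[where ?'a = rat] by blast
  also have "|UNIV :: nat set| \<le>o |C|"
    using assms infinite_iff_card_of_nat by blast
  finally have "|C \<times> (UNIV :: rat set)| =o |C|"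
    using assms card_of_Times_infinite by blast
  then show ?thesis
    using that card_of_ordLeq ordIso_iff_ordLeq by metis
qed

definition I0_below :: "'k rel \<Rightarrow> 'k \<Rightarrow> (nat \<Rightarrow> 'k \<times> rat) set" where
  "I0_below r a = {f \<in> I0 r. \<forall>n. kless r (fst (f n)) a}"

lemma finite_range_fst_I0:
  assumes "f \<in> I0 r"
  shows "finite (range (\<lambda>n. fst (f n)))"
proof -
  have "range (\<lambda>n. fst (f n)) \<subseteq> insert (kzero r) ((\<lambda>n. fst (f n)) ` {n. fst (f n) \<noteq> kzero r})"
    by auto
  moreover have "finite {n. fst (f n) \<noteq> kzero r}"
    using assms by (simp add: I0_def)
  ultimately show ?thesis
    using finite_subset by blast
qed

context
  fixes r :: "'k rel"
  assumes card: "Card_order r" and fld: "Field r = UNIV"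
begin

lemma wo_rel_r: "wo_rel r"
  using card by (simp add: card_order_on_def wo_rel_def)

lemma r_trans: "(a, b) \<in> r \<Longrightarrow> (b, c) \<in> r \<Longrightarrow> (a, c) \<in> r"
  using wo_rel.TRANS[OF wo_rel_r] by (meson transD)

lemma r_antisym: "(a, b) \<in> r \<Longrightarrow> (b, a) \<in> r \<Longrightarrow> a = b"
  using wo_rel.ANTISYM[OF wo_rel_r] by (meson antisymD)

lemma r_total: "(a, b) \<in> r \<or> (b, a) \<in> r"
  using wo_rel.TOTALS[OF wo_rel_r] fld by blast

lemma kless_trans: "kless r a b \<Longrightarrow> kless r b c \<Longrightarrow> kless r a c"
  unfolding kless_def by (metis r_trans r_antisym)

lemma kless_le_trans: "kless r a b \<Longrightarrow> (b, c) \<in> r \<Longrightarrow> kless r a c"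
  and le_kless_trans: "(a, b) \<in> r \<Longrightarrow> kless r b c \<Longrightarrow> kless r a c"
  and not_kless: "\<not> kless r a b \<Longrightarrow> (b, a) \<in> r"
  unfolding kless_def by (metis r_trans r_antisym, metis r_trans r_antisym, metis r_total)

lemma kzero_least: "(kzero r, b) \<in> r"
proof -
  have "\<forall>b. (wo_rel.minim r UNIV, b) \<in> r"
    using wo_rel.minim_least[OF wo_rel_r] fld by simp
  then have "\<exists>!a. \<forall>b. (a, b) \<in> r"
    using r_antisym by blast
  then have "\<forall>b. (kzero r, b) \<in> r"
    unfolding kzero_def by (rule theI')
  then show ?thesis ..
qed

lemma kzero_kless: "d \<noteq> kzero r \<Longrightarrow> kless r (kzero r) d"
  unfolding kless_def using kzero_least by auto

lemma finite_has_greatest: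
  assumes "finite F"
  obtains m where "m \<in> insert (kzero r) F" "\<forall>x\<in>F. (x, m) \<in> r"
  using assms
proof (induction F arbitrary: thesis)
  case empty
  then show ?case by simp
next
  case (insert x F)
  obtain m where m: "m \<in> insert (kzero r) F" "\<forall>y\<in>F. (y, m) \<in> r"
    by (rule insert.IH)
  consider "(m, x) \<in> r" | "(x, m) \<in> r"
    using r_total by blast
  then show ?case
  proof cases
    case 1
    have "(x, x) \<in> r"
      using r_total by blast
    with 1 m(2) have "\<forall>y\<in>insert x F. (y, x) \<in> r"
      using r_trans by blast
    then show ?thesis
      using insert.prems by blast
  next
    case 2
    then show ?thesis
      using insert.prems m by blast
  qed
qed

lemma klimit_finite_bound:
  assumes "klimit r d" "finite F" "\<forall>x\<in>F. kless r x d"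
  obtains b where "kless r b d" "\<forall>x\<in>F. kless r x b"
proof -
  obtain m where m: "m \<in> insert (kzero r) F" "\<forall>x\<in>F. (x, m) \<in> r"
    using finite_has_greatest assms(2) by blast
  have "kless r m d"
    using m(1) assms(1,3) kzero_kless by (auto simp: klimit_def)
  then obtain b where "kless r m b" "kless r b d"
    using assms(1) by (auto simp: klimit_def)
  then show ?thesis
    using that m(2) le_kless_trans by blast
qed

lemma infinite_finite_bound:
  assumes "infinite (UNIV :: 'k set)" "finite F"
  obtains b where "\<forall>x\<in>F. kless r x b"
proof -
  obtain m where m: "\<forall>x\<in>F. (x, m) \<in> r"
    using finite_has_greatest assms(2) by blast
  have "UNIV \<noteq> under r m"
    using Card_order_infinite_not_under[OF card] fld assms(1) by auto
  then obtain b where "(b, m) \<notin> r"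
    unfolding under_def by auto
  then show ?thesis
    using that m not_kless le_kless_trans by blast
qed

lemma infinite_UNIV_if_nat_ordLess:
  assumes "|UNIV :: nat set| <o r"
  shows "infinite (UNIV :: 'k set)"
proof -
  have "|UNIV :: nat set| \<le>o r"
    using assms by (rule ordLess_imp_ordLeq)
  also have "r =o |UNIV :: 'k set|"
    using card_of_Field_ordIso[OF card] fld by (simp add: ordIso_symmetric)
  finally show ?thesis
    by (simp add: infinite_iff_card_of_nat)
qed

lemma small_infinite_superset:
  assumes "|UNIV :: nat set| <o r" "|A| <o r"
  obtains C :: "'k set" where "A \<subseteq> C" "infinite C" "|C| <o r"
proof -
  have inf: "infinite (UNIV :: 'k set)"
    using assms(1) by (rule infinite_UNIV_if_nat_ordLess)
  then obtain h :: "nat \<Rightarrow> 'k" where "inj h"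
    by (meson infinite_iff_countable_subset)
  then have "infinite (range h)"
    using finite_imageD[of h UNIV] infinite_UNIV_nat by blast
  moreover have "|range h| <o r"
    using card_of_image assms(1) by (rule ordLeq_ordLess_trans)
  then have "|A \<union> range h| <o r"
    using card_of_Un_ordLess_infinite_Field[OF _ card assms(2)] inf fld by simp
  ultimately show ?thesis
    using that[of "A \<union> range h"] by simp
qed

lemma I0_below_mono: "(a, b) \<in> r \<Longrightarrow> I0_below r a \<subseteq> I0_below r b"
  unfolding I0_below_def using kless_le_trans by blast

lemma I0_below_continuous:
  assumes "klimit r d"
  shows "I0_below r d = (\<Union>a\<in>{a. kless r a d}. I0_below r a)"
proof
  show "I0_below r d \<subseteq> (\<Union>a\<in>{a. kless r a d}. I0_below r a)"
  proof
    fix f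
    assume f: "f \<in> I0_below r d"
    then have "finite (range (\<lambda>n. fst (f n)))" "\<forall>x\<in>range (\<lambda>n. fst (f n)). kless r x d"
      using finite_range_fst_I0 by (auto simp: I0_below_def)
    then obtain b where "kless r b d" "\<forall>x\<in>range (\<lambda>n. fst (f n)). kless r x b"
      using klimit_finite_bound assms by metis
    then show "f \<in> (\<Union>a\<in>{a. kless r a d}. I0_below r a)"
      using f by (auto simp: I0_below_def)
  qed
  show "(\<Union>a\<in>{a. kless r a d}. I0_below r a) \<subseteq> I0_below r d"
    using I0_below_mono by (auto simp: kless_def)
qed

lemma UN_I0_below:
  assumes "infinite (UNIV :: 'k set)"
  shows "(\<Union>a. I0_below r a) = I0 r"
proof
  show "I0 r \<subseteq> (\<Union>a. I0_below r a)"
  proof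
    fix f
    assume f: "f \<in> I0 r"
    obtain b where "\<forall>x\<in>range (\<lambda>n. fst (f n)). kless r x b"
      using infinite_finite_bound[OF assms finite_range_fst_I0[OF f]] .
    then show "f \<in> (\<Union>a. I0_below r a)"
      using f by (auto simp: I0_below_def)
  qed
qed (auto simp: I0_below_def)

lemma card_of_I0_below:
  assumes "|UNIV :: nat set| <o r"
    and omega_pow: "\<forall>A :: 'k set. |A| <o r \<longrightarrow> |Func (UNIV :: nat set) A| <o r"
  shows "|I0_below r a| <o r"
proof -
  have "|underS r a| <o r"
    using card_of_underS[OF card] fld by simp
  then obtain C where C: "underS r a \<subseteq> C" "infinite C" "|C| <o r"
    using small_infinite_superset assms(1) by metis
  obtain g where g: "inj_on g (C \<times> (UNIV :: rat set))" "g ` (C \<times> UNIV) \<subseteq> C"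
    using inj_Times_rat_into_infinite[OF C(2)] .
  have "I0_below r a \<subseteq> Func UNIV (underS r a \<times> UNIV)"
    by (auto simp: I0_below_def Func_def underS_def kless_def mem_Times_iff)
  then have "|I0_below r a| \<le>o |Func (UNIV :: nat set) (underS r a \<times> (UNIV :: rat set))|"
    by (rule card_of_mono1)
  also have "|Func (UNIV :: nat set) (underS r a \<times> (UNIV :: rat set))| \<le>o |Func (UNIV :: nat set) C|"
    using C(1) g by (intro card_of_Func_UNIV_mono_inj) (auto intro: inj_on_subset)
  also have "|Func (UNIV :: nat set) C| <o r"
    using omega_pow C(3) by blast
  finally show ?thesis .
qed

lemma I0_below_separation:
  assumes d: "klimit r d" and \<nu>: "\<nu> \<in> I0 r"
  shows "\<exists>b. kless r b d \<and>
    (\<forall>\<sigma>\<in>I0_below r d. Iless r \<nu> \<sigma> \<longrightarrow> (\<exists>\<sigma>'\<in>I0_below r b. Iless r \<sigma>' \<sigma> \<and> Iless r \<nu> \<sigma>'))"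
proof -
  define F where "F = insert (kzero r) {x \<in> range (\<lambda>n. fst (\<nu> n)). kless r x d}"
  have "finite F"
    using finite_range_fst_I0[OF \<nu>] by (simp add: F_def)
  moreover have "\<forall>x\<in>F. kless r x d"
    using d kzero_kless by (auto simp: F_def klimit_def)
  ultimately obtain b where b: "kless r b d" "\<forall>x\<in>F. kless r x b"
    using klimit_finite_bound d by metis
  show ?thesis
  proof (intro exI[of _ b] conjI b(1) ballI impI)
    fix \<sigma>
    assume \<sigma>: "\<sigma> \<in> I0_below r d" "Iless r \<nu> \<sigma>"
    then obtain n where agree: "\<forall>m<n. \<nu> m = \<sigma> m" and at_n: "pless r (\<nu> n) (\<sigma> n)"
      unfolding Iless_def by blast
    obtain p where p: "fst p = fst (\<nu> n)" "pless r (\<nu> n) p" "pless r p (\<sigma> n)"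
      using pless_dense[OF at_n] .
    have \<sigma>_below: "kless r (fst (\<sigma> m)) d" for m
      using \<sigma>(1) by (simp add: I0_below_def)
    have \<nu>_below: "kless r (fst (\<nu> m)) b" if "m \<le> n" for m
    proof -
      have "kless r (fst (\<nu> m)) d"
      proof (cases "m < n")
        case True
        then show ?thesis
          using agree \<sigma>_below by simp
      next
        case False
        with that have "m = n" by simp
        then show ?thesis
          using at_n \<sigma>_below[of n] kless_trans by (auto simp: pless_def)
      qed
      then show ?thesis
        using b(2) by (simp add: F_def)
    qed
    define \<sigma>' where "\<sigma>' = (\<lambda>m. if m < n then \<nu> m else if m = n then p else (kzero r, 0))"
    have "{m. fst (\<sigma>' m) \<noteq> kzero r} \<subseteq> {..n}"
      by (auto simp: \<sigma>'_def)
    then have "\<sigma>' \<in> I0 r"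
      unfolding I0_def using finite_subset by blast
    moreover have "kless r (fst (\<sigma>' m)) b" for m
      using \<nu>_below b(2) p(1) by (simp add: \<sigma>'_def F_def)
    ultimately have "\<sigma>' \<in> I0_below r b"
      by (simp add: I0_below_def)
    moreover have "Iless r \<sigma>' \<sigma>" "Iless r \<nu> \<sigma>'"
      using agree p by (auto simp: \<sigma>'_def intro!: IlessI[of n])
    ultimately show "\<exists>\<sigma>'\<in>I0_below r b. Iless r \<sigma>' \<sigma> \<and> Iless r \<nu> \<sigma>'"
      by blast
  qed
qed

lemma krep_I0_below:
  assumes "|UNIV :: nat set| <o r"
    and "\<forall>A :: 'k set. |A| <o r \<longrightarrow> |Func (UNIV :: nat set) A| <o r"
  shows "krep r (I0 r) (I0_below r)"
  unfolding krep_def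
  using I0_below_mono I0_below_continuous card_of_I0_below[OF assms]
    UN_I0_below[OF infinite_UNIV_if_nat_ordLess[OF assms(1)]]
  by (auto simp: I0_below_def)

end

theorem mainTheorem9:
  fixes r :: "'k rel"
  assumes card: "Card_order r" and fld: "Field r = UNIV"
    and reg: "regularCard r"
    and uncountable: "(card_of (UNIV :: nat set), r) \<in> ordLess"
    and small_pow: "\<forall>A :: 'k set. (card_of A, r) \<in> ordLess \<longrightarrow> (card_of (Func A (UNIV :: 'k set)), r) \<in> ordLeq"
    and omega_pow: "\<forall>A :: 'k set. (card_of A, r) \<in> ordLess \<longrightarrow> (card_of (Func (UNIV :: nat set) A), r) \<in> ordLess"
  shows "\<exists>X. krep r (I0 r) X \<and>
    (\<forall>d. klimit r d \<longrightarrow>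
      (\<forall>\<nu>\<in>I0 r. \<nu> \<notin> X d \<longrightarrow>
        (\<exists>b. kless r b d \<and>
          (\<forall>\<sigma>\<in>X d. Iless r \<nu> \<sigma> \<longrightarrow>
             (\<exists>\<sigma>'\<in>X b. Iless r \<sigma>' \<sigma> \<and> Iless r \<nu> \<sigma>')))))"
proof -
  have "krep r (I0 r) (I0_below r)"
    by (rule krep_I0_below[OF card fld uncountable omega_pow])
  with I0_below_separation[OF card fld] show ?thesis
    by blast
qed

end
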